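(* Let $\Psi := \forall x\,\gamma(x)\wedge\bigwedge_{i=1}^n\forall x\forall y\,(e_i(x,y)\to\alpha_i(x,y))\wedge\forall x\,\deg(x)\in S$, where $\gamma$ and the $\alpha_i$ are quantifier-free, each $e_i(x,y)$ is either $x=y$ or an atom $R(x,y)$ or $R(y,x)$ with $R$ binary, and $S=\bigcup_{i=1}^p S_i$ with $S_i = L(\bar v_{i,0};\bar v_{i,1},\ldots,\bar v_{i,k_i})\subseteq\mathbb{N}^{\ell}$. Let $\Psi^*$ be the conjunction of $\forall x\,\gamma(x)$, of $\bigwedge_{i=1}^n\forall x\forall y\,(e_i(x,y)\to\alpha_i(x,y))$, and of the two conditions: ($\xi$) for every element $a$, $\deg(a)\in\{\bar v_{i,0}\}\cup\{\bar v_{i,1},\ldots,\bar v_{i,k_i}\}$ for some $1\le i\le p$; ($\phi$) for every element $a$ with $\deg(a)\neq\bar v_{i,0}$ for all $1\le i\le p$, there exist an element $b$ with the same 1-type as $a$ and an index $j\in\{1,\dots,p\}$ such that $\deg(a)\in\{\bar v_{j,1},\ldots,\bar v_{j,k_j}\}$ and $\deg(b)=\bar v_{j,0}$. Then $\Psi$ has a finite model if and only if $\Psi^*$ has a finite model.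
   Context: Signature: finitely many unary and binary relation symbols plus equality. A 1-type is a maximal consistent set of atoms/negated atoms in one variable $x$ (unary atoms $U(x)$ and atoms $R(x,x)$). A 2-type is a maximal consistent set of atoms/negated atoms $R(x,y)$, $R(y,x)$ for binary $R$, together with $x\neq y$. The null type $\eta_{null}$ contains only negated atoms; all other 2-types are non-null; let $\eta_1,\ldots,\eta_\ell$ enumerate the non-null 2-types. In a structure $\mathcal{M}$, for $a\in M$, $\deg_{\mathcal{M},\eta}(a)$ is the number of $b\neq a$ such that $(a,b)$ realizes $\eta$, and $\deg(a):=(\deg_{\mathcal{M},\eta_1}(a),\ldots,\deg_{\mathcal{M},\eta_\ell}(a))\in\mathbb{N}^\ell$; $\mathcal{M}\models\forall x\,\deg(x)\in S$ means $\deg(a)\in S$ for all $a$. For vectors $\bar v_0,\ldots,\bar v_k\in\mathbb{N}^\ell$, $L(\bar v_0;\bar v_1,\ldots,\bar v_k)=\{\bar v_0+\sum_{i=1}^k n_i\bar v_i : n_i\in\mathbb{N}\}$. *)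

theory Defs
  imports Main
begin

datatype var = Vx | Vy

datatype ('u, 'b) qf =
    QTrue
  | QEq var var
  | QU 'u var
  | QR 'b var var
  | QNot "('u, 'b) qf"
  | QAnd "('u, 'b) qf" "('u, 'b) qf"
  | QOr "('u, 'b) qf" "('u, 'b) qf"

fun qf_vars :: "('u, 'b) qf \<Rightarrow> var set" where
  "qf_vars QTrue = {}"
| "qf_vars (QEq v w) = {v, w}"
| "qf_vars (QU u v) = {v}"
| "qf_vars (QR r v w) = {v, w}"
| "qf_vars (QNot f) = qf_vars f"
| "qf_vars (QAnd f g) = qf_vars f \<union> qf_vars g"
| "qf_vars (QOr f g) = qf_vars f \<union> qf_vars g"

datatype 'b guard = GEq | GFwd 'b | GBwd 'b

record ('a, 'u, 'b) struc =
  dom :: "'a set"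
  uI :: "'u \<Rightarrow> 'a \<Rightarrow> bool"
  bI :: "'b \<Rightarrow> 'a \<Rightarrow> 'a \<Rightarrow> bool"

fun qf_eval :: "('a, 'u, 'b) struc \<Rightarrow> (var \<Rightarrow> 'a) \<Rightarrow> ('u, 'b) qf \<Rightarrow> bool" where
  "qf_eval M s QTrue = True"
| "qf_eval M s (QEq v w) = (s v = s w)"
| "qf_eval M s (QU u v) = uI M u (s v)"
| "qf_eval M s (QR r v w) = bI M r (s v) (s w)"
| "qf_eval M s (QNot f) = (\<not> qf_eval M s f)"
| "qf_eval M s (QAnd f g) = (qf_eval M s f \<and> qf_eval M s g)"
| "qf_eval M s (QOr f g) = (qf_eval M s f \<or> qf_eval M s g)"

definition asg :: "'a \<Rightarrow> 'a \<Rightarrow> var \<Rightarrow> 'a" where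
  "asg a b = (\<lambda>v. if v = Vx then a else b)"

fun guard_eval :: "('a, 'u, 'b) struc \<Rightarrow> 'b guard \<Rightarrow> 'a \<Rightarrow> 'a \<Rightarrow> bool" where
  "guard_eval M GEq a b = (a = b)"
| "guard_eval M (GFwd r) a b = bI M r a b"
| "guard_eval M (GBwd r) a b = bI M r b a"

text \<open>A 2-type (for x \<noteq> y) is determined by the truth values of R(x,y), R(y,x) for each binary R.\<close>
type_synonym 'b type2 = "'b \<Rightarrow> bool \<times> bool"

definition null2 :: "'b type2" where
  "null2 = (\<lambda>_. (False, False))"

definition tp2 :: "('a, 'u, 'b) struc \<Rightarrow> 'a \<Rightarrow> 'a \<Rightarrow> 'b type2" where
  "tp2 M a b = (\<lambda>r. (bI M r a b, bI M r b a))"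

definition tp1 :: "('a, 'u, 'b) struc \<Rightarrow> 'a \<Rightarrow> ('u \<Rightarrow> bool) \<times> ('b \<Rightarrow> bool)" where
  "tp1 M a = (\<lambda>u. uI M u a, \<lambda>r. bI M r a a)"

text \<open>Vectors in N^l are represented as functions from 2-types to nat,
  indexed by the non-null 2-types (the entry at the null type is fixed to 0).\<close>
definition deg :: "('a, 'u, 'b) struc \<Rightarrow> 'a \<Rightarrow> 'b type2 \<Rightarrow> nat" where
  "deg M a = (\<lambda>\<eta>. if \<eta> = null2 then 0
                   else card {b \<in> dom M. b \<noteq> a \<and> tp2 M a b = \<eta>})"

definition linset :: "('t \<Rightarrow> nat) \<Rightarrow> ('t \<Rightarrow> nat) list \<Rightarrow> ('t \<Rightarrow> nat) set" where
  "linset v0 vs = {w. \<exists>ns :: nat list. length ns = length vs \<and>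
      w = (\<lambda>t. v0 t + (\<Sum>i<length vs. ns ! i * (vs ! i) t))}"

definition base_ok :: "('a, 'u, 'b) struc \<Rightarrow> ('u, 'b) qf \<Rightarrow> ('b guard \<times> ('u, 'b) qf) list \<Rightarrow> bool" where
  "base_ok M \<gamma> cs \<longleftrightarrow>
     (\<forall>a \<in> dom M. qf_eval M (asg a a) \<gamma>) \<and>
     (\<forall>(e, \<alpha>) \<in> set cs. \<forall>a \<in> dom M. \<forall>b \<in> dom M.
         guard_eval M e a b \<longrightarrow> qf_eval M (asg a b) \<alpha>)"

definition sat_Psi :: "('a, 'u, 'b) struc \<Rightarrow> ('u, 'b) qf \<Rightarrow> ('b guard \<times> ('u, 'b) qf) list
    \<Rightarrow> (('b type2 \<Rightarrow> nat) \<times> ('b type2 \<Rightarrow> nat) list) list \<Rightarrow> bool" where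
  "sat_Psi M \<gamma> cs Ls \<longleftrightarrow> base_ok M \<gamma> cs \<and>
     (\<forall>a \<in> dom M. deg M a \<in> (\<Union>(v0, vs) \<in> set Ls. linset v0 vs))"

definition sat_Psi_star :: "('a, 'u, 'b) struc \<Rightarrow> ('u, 'b) qf \<Rightarrow> ('b guard \<times> ('u, 'b) qf) list
    \<Rightarrow> (('b type2 \<Rightarrow> nat) \<times> ('b type2 \<Rightarrow> nat) list) list \<Rightarrow> bool" where
  "sat_Psi_star M \<gamma> cs Ls \<longleftrightarrow> base_ok M \<gamma> cs \<and>
     (\<forall>a \<in> dom M. \<exists>(v0, vs) \<in> set Ls. deg M a \<in> insert v0 (set vs)) \<and>
     (\<forall>a \<in> dom M. (\<forall>(v0, vs) \<in> set Ls. deg M a \<noteq> v0) \<longrightarrow>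
        (\<exists>b \<in> dom M. tp1 M b = tp1 M a \<and>
           (\<exists>(v0, vs) \<in> set Ls. deg M a \<in> set vs \<and> deg M b = v0)))"

text \<open>Finite models: nonempty finite domain; w.l.o.g. a subset of nat.\<close>
definition finite_struc :: "('a, 'u, 'b) struc \<Rightarrow> bool" where
  "finite_struc M \<longleftrightarrow> finite (dom M) \<and> dom M \<noteq> {}"

end

theory Submission
  imports Defs
begin

text \<open>From a model of Psi to one of Psi*: write
  deg a = v0 + w1 + ... + wk with v0 the base vector and the wi periods of one linear set, and split a
  into copies a0, ..., ak, distributing the neighbours of a so that the copy ai has degree wi (and a0
  degree v0); two elements keep an edge only between the copies that were assigned to each other, so
  1-types and all guarded constraints survive.  Conversely, call an element a hub if its degree is a
  base vector; by (phi) every other element x has a hub of its 1-type whose base vector belongs to a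
  linear set with period deg x.  Take many copies of the model and glue each non-hub onto a copy of
  its hub, the copies being shifted by a Sidon sequence so that no two edges are ever identified;
  a glued node then has degree v0 plus a combination of periods, so it lies in S.\<close>

lemma qf_eval_cong:
  assumes "\<And>v w. (s v = s w) = (s' v = s' w)"
    and "\<And>u v. uI M u (s v) = uI M' u (s' v)"
    and "\<And>r v w. bI M r (s v) (s w) = bI M' r (s' v) (s' w)"
  shows "qf_eval M s f = qf_eval M' s' f"
  by (induction f) (auto simp: assms)

lemma qf_eval_asg_cong:
  assumes "(a = b) = (a' = b')"
    and "\<And>u. uI M u a = uI M' u a'" "\<And>u. uI M u b = uI M' u b'"
    and "\<And>r. bI M r a a = bI M' r a' a'" "\<And>r. bI M r a b = bI M' r a' b'"
    and "\<And>r. bI M r b a = bI M' r b' a'" "\<And>r. bI M r b b = bI M' r b' b'"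
  shows "qf_eval M (asg a b) f = qf_eval M' (asg a' b') f"
proof (rule qf_eval_cong)
  fix v w show "(asg a b v = asg a b w) = (asg a' b' v = asg a' b' w)"
    using assms(1) by (cases v; cases w) (auto simp: asg_def)
next
  fix u v show "uI M u (asg a b v) = uI M' u (asg a' b' v)"
    using assms(2,3) by (cases v) (auto simp: asg_def)
next
  fix r v w show "bI M r (asg a b v) (asg a b w) = bI M' r (asg a' b' v) (asg a' b' w)"
    using assms(4-7) by (cases v; cases w) (auto simp: asg_def)
qed

lemma tp2_eq_null2_commute: "tp2 M b a = null2 \<longleftrightarrow> tp2 M a b = null2"
  by (auto simp: tp2_def null2_def fun_eq_iff)

lemma tp2_neq_null2_iff: "tp2 M a b \<noteq> null2 \<longleftrightarrow> (\<exists>r. bI M r a b \<or> bI M r b a)"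
  by (auto simp: tp2_def null2_def fun_eq_iff)

definition struc_iso :: "('a \<Rightarrow> 'c) \<Rightarrow> ('a, 'u, 'b) struc \<Rightarrow> ('c, 'u, 'b) struc \<Rightarrow> bool" where
  "struc_iso h M M' \<longleftrightarrow> bij_betw h (dom M) (dom M') \<and>
     (\<forall>u. \<forall>a\<in>dom M. uI M' u (h a) = uI M u a) \<and>
     (\<forall>r. \<forall>a\<in>dom M. \<forall>b\<in>dom M. bI M' r (h a) (h b) = bI M r a b)"

context
  fixes h :: "'a \<Rightarrow> 'c" and M :: "('a, 'u, 'b) struc" and M' :: "('c, 'u, 'b) struc"
  assumes iso: "struc_iso h M M'"
begin

lemma dom_struc_iso: "dom M' = h ` dom M" and inj_on_struc_iso: "inj_on h (dom M)"
  using iso by (auto simp: struc_iso_def bij_betw_def)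

lemma finite_struc_iso: "finite_struc M' \<longleftrightarrow> finite_struc M"
  unfolding finite_struc_def dom_struc_iso using inj_on_struc_iso finite_image_iff by auto

lemma tp1_struc_iso: "a \<in> dom M \<Longrightarrow> tp1 M' (h a) = tp1 M a"
  using iso by (auto simp: struc_iso_def tp1_def)

lemma tp2_struc_iso: "a \<in> dom M \<Longrightarrow> b \<in> dom M \<Longrightarrow> tp2 M' (h a) (h b) = tp2 M a b"
  using iso by (auto simp: struc_iso_def tp2_def)

lemma deg_struc_iso:
  assumes a: "a \<in> dom M"
  shows "deg M' (h a) = deg M a"
proof
  fix \<eta>
  have "{y \<in> dom M'. y \<noteq> h a \<and> tp2 M' (h a) y = \<eta>} = h ` {b \<in> dom M. b \<noteq> a \<and> tp2 M a b = \<eta>}"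
    using a tp2_struc_iso inj_on_struc_iso unfolding dom_struc_iso by (auto simp: inj_on_eq_iff)
  moreover have "inj_on h {b \<in> dom M. b \<noteq> a \<and> tp2 M a b = \<eta>}"
    by (rule inj_on_subset[OF inj_on_struc_iso]) auto
  ultimately show "deg M' (h a) \<eta> = deg M a \<eta>"
    by (simp add: deg_def card_image)
qed

lemma base_ok_struc_iso: "base_ok M' \<gamma> cs \<longleftrightarrow> base_ok M \<gamma> cs"
proof -
  have qf: "qf_eval M' (asg (h a) (h b)) f = qf_eval M (asg a b) f"
    if "a \<in> dom M" "b \<in> dom M" for a b f
    by (rule qf_eval_asg_cong)
      (use that iso inj_on_struc_iso in \<open>auto simp: struc_iso_def inj_on_eq_iff\<close>)
  have guard: "guard_eval M' e (h a) (h b) = guard_eval M e a b"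
    if "a \<in> dom M" "b \<in> dom M" for a b e
    using that iso inj_on_struc_iso by (cases e) (auto simp: struc_iso_def inj_on_eq_iff)
  show ?thesis
    unfolding base_ok_def dom_struc_iso using qf guard by (auto simp: case_prod_beta)
qed

lemma sat_Psi_struc_iso: "sat_Psi M' \<gamma> cs Ls \<longleftrightarrow> sat_Psi M \<gamma> cs Ls"
  unfolding sat_Psi_def base_ok_struc_iso dom_struc_iso using deg_struc_iso by auto

lemma sat_Psi_star_struc_iso: "sat_Psi_star M' \<gamma> cs Ls \<longleftrightarrow> sat_Psi_star M \<gamma> cs Ls"
  unfolding sat_Psi_star_def base_ok_struc_iso dom_struc_iso
  using deg_struc_iso tp1_struc_iso by (auto 0 3)

end

lemma finite_struc_iso_nat:
  fixes M :: "('a, 'u, 'b) struc"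
  assumes "finite_struc M"
  obtains h and M' :: "(nat, 'u, 'b) struc" where "struc_iso h M M'"
proof -
  obtain h :: "'a \<Rightarrow> nat" and n where h: "h ` dom M = {i. i < n}" "inj_on h (dom M)"
    using finite_imp_inj_to_nat_seg assms unfolding finite_struc_def by blast
  define M' :: "(nat, 'u, 'b) struc" where "M' = \<lparr>dom = h ` dom M,
     uI = (\<lambda>u y. uI M u (inv_into (dom M) h y)),
     bI = (\<lambda>r y z. bI M r (inv_into (dom M) h y) (inv_into (dom M) h z))\<rparr>"
  have "struc_iso h M M'"
    using h by (auto simp: struc_iso_def M'_def bij_betw_def)
  then show ?thesis by (rule that)
qed

lemma linset_base: "v0 \<in> linset v0 vs"
  unfolding linset_def by (intro CollectI exI[of _ "replicate (length vs) 0"]) auto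

lemma linset_add:
  assumes "w \<in> linset v0 vs" "v \<in> set vs"
  shows "(\<lambda>t. w t + n * v t) \<in> linset v0 vs"
proof -
  obtain ns where ns: "length ns = length vs" "w = (\<lambda>t. v0 t + (\<Sum>i<length vs. ns ! i * (vs ! i) t))"
    using assms(1) unfolding linset_def by auto
  obtain i where i: "i < length vs" "vs ! i = v" using assms(2) by (auto simp: in_set_conv_nth)
  define ns' where "ns' = ns[i := ns ! i + n]"
  have "(\<Sum>i'<length vs. ns' ! i' * (vs ! i') t)
      = (\<Sum>i'<length vs. ns ! i' * (vs ! i') t + (if i' = i then n * (vs ! i') t else 0))" for t
    by (rule sum.cong) (auto simp: ns'_def ns(1) nth_list_update algebra_simps)
  also have "\<dots> t = (\<Sum>i'<length vs. ns ! i' * (vs ! i') t) + n * v t" for t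
    using i by (simp add: sum.distrib)
  finally have "(\<lambda>t. w t + n * v t) = (\<lambda>t. v0 t + (\<Sum>i'<length vs. ns' ! i' * (vs ! i') t))"
    using ns by (auto simp: fun_eq_iff)
  moreover have "length ns' = length vs" using ns by (simp add: ns'_def)
  ultimately show ?thesis unfolding linset_def by blast
qed

lemma linset_add_sum:
  assumes "finite X" "\<forall>x\<in>X. f x \<in> set vs"
  shows "(\<lambda>t. v0 t + (\<Sum>x\<in>X. n * f x t)) \<in> linset v0 vs"
  using assms
proof (induction X rule: finite_induct)
  case empty then show ?case using linset_base by simp
next
  case (insert x X)
  have "(\<lambda>t. (v0 t + (\<Sum>x\<in>X. n * f x t)) + n * f x t) \<in> linset v0 vs"
    using insert by (intro linset_add) auto
  then show ?case using insert by (simp add: add.commute add.left_commute)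
qed

lemma linset_decomp:
  assumes "w \<in> linset v0 vs"
  obtains ws where "set ws \<subseteq> set vs" "\<And>t. w t = v0 t + (\<Sum>v\<leftarrow>ws. v t)"
proof -
  obtain ns where ns: "w = (\<lambda>t. v0 t + (\<Sum>i<length vs. ns ! i * (vs ! i) t))"
    using assms unfolding linset_def by auto
  define ws where "ws = concat (map (\<lambda>i. replicate (ns ! i) (vs ! i)) [0..<length vs])"
  have sum_concat: "(\<Sum>v\<leftarrow>concat xss. f v) = (\<Sum>xs\<leftarrow>xss. \<Sum>v\<leftarrow>xs. f v)"
    for xss and f :: "_ \<Rightarrow> nat"
    by (induction xss) auto
  have "(\<Sum>v\<leftarrow>ws. v t) = (\<Sum>i\<leftarrow>[0..<length vs]. ns ! i * (vs ! i) t)" for t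
    by (simp add: ws_def sum_concat o_def sum_list_replicate)
  then have "(\<Sum>v\<leftarrow>ws. v t) = (\<Sum>i<length vs. ns ! i * (vs ! i) t)" for t
    by (simp add: sum_set_upt_conv_sum_list_nat[symmetric] atLeast0LessThan)
  moreover have "set ws \<subseteq> set vs" by (auto simp: ws_def)
  ultimately show ?thesis using that ns by simp
qed

lemma finite_partition_card:
  assumes "finite A" "card A = (\<Sum>c<(q::nat). s c)"
  shows "\<exists>f. (\<forall>x\<in>A. f x < q) \<and> (\<forall>c<q. card {x\<in>A. f x = c} = s c)"
  using assms
proof (induction q arbitrary: A)
  case 0
  then show ?case by auto
next
  case (Suc q)
  obtain B where B: "B \<subseteq> A" "card B = s q"
    using obtain_subset_with_card_n[of "s q" A] Suc.prems by auto
  have "card (A - B) = (\<Sum>c<q. s c)"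
    using Suc.prems B by (simp add: card_Diff_subset finite_subset)
  then obtain f where f: "\<forall>x\<in>A - B. f x < q" "\<forall>c<q. card {x\<in>A - B. f x = c} = s c"
    using Suc.IH[of "A - B"] Suc.prems by blast
  define f' where "f' x = (if x \<in> B then q else f x)" for x
  have "\<forall>x\<in>A. f' x < Suc q" using f(1) by (simp add: f'_def less_Suc_eq)
  moreover have "card {x\<in>A. f' x = c} = s c" if "c < Suc q" for c
  proof (cases "c = q")
    case True
    then have "{x\<in>A. f' x = c} = B" using f B by (auto simp: f'_def)
    then show ?thesis using B True by simp
  next
    case False
    then have "{x\<in>A. f' x = c} = {x\<in>A - B. f x = c}" by (auto simp: f'_def)
    then show ?thesis using f that False by simp
  qed
  ultimately show ?case by blast
qed

lemma neighbourhood_partition: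
  assumes "finite (dom M)"
    and deg_sum: "\<And>\<eta>. \<eta> \<noteq> null2 \<Longrightarrow> deg M a \<eta> = (\<Sum>c<length W. (W ! c) \<eta>)"
  obtains \<pi> where "\<And>b. b \<in> dom M \<Longrightarrow> b \<noteq> a \<Longrightarrow> tp2 M a b \<noteq> null2 \<Longrightarrow> \<pi> b < length W"
    and "\<And>c \<eta>. c < length W \<Longrightarrow> \<eta> \<noteq> null2 \<Longrightarrow>
           card {b \<in> dom M. b \<noteq> a \<and> tp2 M a b = \<eta> \<and> \<pi> b = c} = (W ! c) \<eta>"
proof -
  define A where "A \<eta> = {b \<in> dom M. b \<noteq> a \<and> tp2 M a b = \<eta>}" for \<eta>
  have "\<exists>f. \<eta> \<noteq> null2 \<longrightarrow> (\<forall>x\<in>A \<eta>. f x < length W) \<and>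
          (\<forall>c<length W. card {x\<in>A \<eta>. f x = c} = (W ! c) \<eta>)" for \<eta>
  proof (cases "\<eta> = null2")
    case False
    then have "card (A \<eta>) = (\<Sum>c<length W. (W ! c) \<eta>)"
      using deg_sum by (simp add: A_def deg_def)
    moreover have "finite (A \<eta>)" using assms(1) by (simp add: A_def)
    ultimately show ?thesis using finite_partition_card by blast
  qed auto
  then have "\<exists>F. \<forall>\<eta>. \<eta> \<noteq> null2 \<longrightarrow> (\<forall>x\<in>A \<eta>. F \<eta> x < length W) \<and>
      (\<forall>c<length W. card {x\<in>A \<eta>. F \<eta> x = c} = (W ! c) \<eta>)"
    by (intro choice allI) blast
  then obtain F where F: "\<And>\<eta>. \<eta> \<noteq> null2 \<Longrightarrow> (\<forall>x\<in>A \<eta>. F \<eta> x < length W) \<and>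
      (\<forall>c<length W. card {x\<in>A \<eta>. F \<eta> x = c} = (W ! c) \<eta>)"
    by blast
  show ?thesis
  proof (rule that[of "\<lambda>b. F (tp2 M a b) b"])
    show "F (tp2 M a b) b < length W" if "b \<in> dom M" "b \<noteq> a" "tp2 M a b \<noteq> null2" for b
      using that F by (auto simp: A_def)
    show "card {b \<in> dom M. b \<noteq> a \<and> tp2 M a b = \<eta> \<and> F (tp2 M a b) b = c} = (W ! c) \<eta>"
      if "c < length W" "\<eta> \<noteq> null2" for c \<eta>
    proof -
      have "{b \<in> dom M. b \<noteq> a \<and> tp2 M a b = \<eta> \<and> F (tp2 M a b) b = c} = {x\<in>A \<eta>. F \<eta> x = c}"
        by (auto simp: A_def)
      then show ?thesis using F that by simp
    qed
  qed
qed

text \<open>Splitting: every element a is replaced by copies (a, c), c < length (W a); the copy (a, c)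
  keeps exactly the neighbours b with \<pi> a b = c, so that its degree becomes W a ! c.\<close>

locale degree_split =
  fixes M :: "('a, 'u, 'b) struc" and W :: "'a \<Rightarrow> ('b type2 \<Rightarrow> nat) list"
    and \<pi> :: "'a \<Rightarrow> 'a \<Rightarrow> nat"
  assumes W_null2: "\<And>a c. a \<in> dom M \<Longrightarrow> c < length (W a) \<Longrightarrow> (W a ! c) null2 = 0"
    and \<pi>_less: "\<And>a b. a \<in> dom M \<Longrightarrow> b \<in> dom M \<Longrightarrow> b \<noteq> a \<Longrightarrow> tp2 M a b \<noteq> null2 \<Longrightarrow>
        \<pi> a b < length (W a)"
    and \<pi>_card: "\<And>a c \<eta>. a \<in> dom M \<Longrightarrow> c < length (W a) \<Longrightarrow> \<eta> \<noteq> null2 \<Longrightarrow>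
        card {b \<in> dom M. b \<noteq> a \<and> tp2 M a b = \<eta> \<and> \<pi> a b = c} = (W a ! c) \<eta>"
begin

definition split_struc :: "('a \<times> nat, 'u, 'b) struc" where
  "split_struc = \<lparr>dom = Sigma (dom M) (\<lambda>a. {..<length (W a)}),
     uI = (\<lambda>u p. uI M u (fst p)),
     bI = (\<lambda>r p q. if fst p = fst q then snd p = snd q \<and> bI M r (fst p) (fst p)
                   else bI M r (fst p) (fst q) \<and> \<pi> (fst p) (fst q) = snd p \<and> \<pi> (fst q) (fst p) = snd q)\<rparr>"

lemma dom_split_struc: "(a, c) \<in> dom split_struc \<longleftrightarrow> a \<in> dom M \<and> c < length (W a)"
  by (simp add: split_struc_def)

lemma tp1_split_struc: "tp1 split_struc (a, c) = tp1 M a"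
  by (simp add: tp1_def split_struc_def)

lemma tp2_split_struc_diff:
  "a \<noteq> b \<Longrightarrow> tp2 split_struc (a, c) (b, d) = (if \<pi> a b = c \<and> \<pi> b a = d then tp2 M a b else null2)"
  by (auto simp: tp2_def split_struc_def null2_def fun_eq_iff)

lemma tp2_split_struc_same: "c \<noteq> d \<Longrightarrow> tp2 split_struc (a, c) (a, d) = null2"
  by (auto simp: tp2_def split_struc_def null2_def fun_eq_iff)

lemma deg_split_struc:
  assumes a: "a \<in> dom M" and c: "c < length (W a)"
  shows "deg split_struc (a, c) = W a ! c"
proof
  fix \<eta>
  show "deg split_struc (a, c) \<eta> = (W a ! c) \<eta>"
  proof (cases "\<eta> = null2")
    case True
    then show ?thesis using W_null2[OF a c] by (simp add: deg_def)
  next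
    case False
    have "{p \<in> dom split_struc. p \<noteq> (a, c) \<and> tp2 split_struc (a, c) p = \<eta>}
          = (\<lambda>b. (b, \<pi> b a)) ` {b \<in> dom M. b \<noteq> a \<and> tp2 M a b = \<eta> \<and> \<pi> a b = c}"
    proof (intro equalityI subsetI)
      fix p assume p: "p \<in> {p \<in> dom split_struc. p \<noteq> (a, c) \<and> tp2 split_struc (a, c) p = \<eta>}"
      obtain b d where bd: "p = (b, d)" by (cases p)
      have "b \<noteq> a" using p tp2_split_struc_same False unfolding bd by auto
      then show "p \<in> (\<lambda>b. (b, \<pi> b a)) ` {b \<in> dom M. b \<noteq> a \<and> tp2 M a b = \<eta> \<and> \<pi> a b = c}"
        using p tp2_split_struc_diff[of a b c d] False unfolding bd
        by (auto simp: dom_split_struc split: if_splits)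
    next
      fix p assume "p \<in> (\<lambda>b. (b, \<pi> b a)) ` {b \<in> dom M. b \<noteq> a \<and> tp2 M a b = \<eta> \<and> \<pi> a b = c}"
      then obtain b where b: "p = (b, \<pi> b a)" "b \<in> dom M" "b \<noteq> a" "tp2 M a b = \<eta>" "\<pi> a b = c"
        by auto
      then have "tp2 M b a \<noteq> null2" using False tp2_eq_null2_commute by metis
      then have "\<pi> b a < length (W b)" using \<pi>_less b a by auto
      then show "p \<in> {p \<in> dom split_struc. p \<noteq> (a, c) \<and> tp2 split_struc (a, c) p = \<eta>}"
        using b tp2_split_struc_diff[of a b c "\<pi> b a"] by (auto simp: dom_split_struc)
    qed
    moreover have "inj_on (\<lambda>b. (b, \<pi> b a)) X" for X by (auto simp: inj_on_def)
    ultimately show ?thesis using \<pi>_card[OF a c False] False by (simp add: deg_def card_image)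
  qed
qed

lemma qf_eval_split_struc:
  assumes "a = b \<Longrightarrow> c = d" "a \<noteq> b \<Longrightarrow> \<pi> a b = c \<and> \<pi> b a = d"
  shows "qf_eval split_struc (asg (a, c) (b, d)) f = qf_eval M (asg a b) f"
  by (rule qf_eval_asg_cong) (use assms in \<open>auto simp: split_struc_def\<close>)

lemma guard_eval_split_struc:
  assumes "guard_eval split_struc e (a, c) (b, d)"
  shows "guard_eval M e a b \<and> (a = b \<longrightarrow> c = d) \<and> (a \<noteq> b \<longrightarrow> \<pi> a b = c \<and> \<pi> b a = d)"
  using assms by (cases e) (auto simp: split_struc_def split: if_splits)

lemma base_ok_split_struc:
  assumes "base_ok M \<gamma> cs"
  shows "base_ok split_struc \<gamma> cs"
proof -
  have "qf_eval split_struc (asg p p) \<gamma>" if p: "p \<in> dom split_struc" for p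
  proof -
    obtain a c where "p = (a, c)" "a \<in> dom M" using p by (cases p) (auto simp: dom_split_struc)
    then show ?thesis using assms qf_eval_split_struc[of a a c c] by (auto simp: base_ok_def)
  qed
  moreover have "qf_eval split_struc (asg p q) \<alpha>"
    if "(e, \<alpha>) \<in> set cs" and pq: "p \<in> dom split_struc" "q \<in> dom split_struc"
      and "guard_eval split_struc e p q" for e \<alpha> p q
  proof -
    obtain a c b d where "p = (a, c)" "q = (b, d)" "a \<in> dom M" "b \<in> dom M"
      using pq by (cases p, cases q) (auto simp: dom_split_struc)
    then show ?thesis
      using that assms guard_eval_split_struc[of e a c b d] qf_eval_split_struc[of a b c d \<alpha>]
      by (fastforce simp: base_ok_def)
  qed
  ultimately show ?thesis unfolding base_ok_def by blast
qed

lemma finite_struc_split_struc: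
  assumes "finite_struc M" "\<And>a. a \<in> dom M \<Longrightarrow> W a \<noteq> []"
  shows "finite_struc split_struc"
proof -
  obtain a where "a \<in> dom M" using assms(1) by (auto simp: finite_struc_def)
  then have "(a, 0) \<in> dom split_struc" using assms(2) by (simp add: dom_split_struc)
  then show ?thesis using assms(1) by (auto simp: finite_struc_def split_struc_def)
qed

lemma sat_Psi_star_split_struc:
  assumes "base_ok M \<gamma> cs"
    and L: "\<And>a. a \<in> dom M \<Longrightarrow> L a \<in> set Ls"
    and W_hd: "\<And>a. a \<in> dom M \<Longrightarrow> W a \<noteq> [] \<and> W a ! 0 = fst (L a)"
    and W_set: "\<And>a. a \<in> dom M \<Longrightarrow> set (W a) \<subseteq> insert (fst (L a)) (set (snd (L a)))"
  shows "sat_Psi_star split_struc \<gamma> cs Ls"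
  unfolding sat_Psi_star_def
proof (intro conjI ballI impI)
  show "base_ok split_struc \<gamma> cs"
    using assms(1) by (rule base_ok_split_struc)
next
  fix p assume "p \<in> dom split_struc"
  then obtain a c where p: "p = (a, c)" "a \<in> dom M" "c < length (W a)"
    by (cases p) (auto simp: dom_split_struc)
  have deg_in: "deg split_struc p \<in> insert (fst (L a)) (set (snd (L a)))"
    using deg_split_struc[OF p(2,3)] W_set[OF p(2)] nth_mem[OF p(3)] p(1) by auto
  then show "\<exists>(v0, vs)\<in>set Ls. deg split_struc p \<in> insert v0 (set vs)"
    using L[OF p(2)] by (cases "L a") auto
  assume "\<forall>(v0, vs)\<in>set Ls. deg split_struc p \<noteq> v0"
  then have "deg split_struc p \<in> set (snd (L a))"
    using deg_in L[OF p(2)] by (cases "L a") auto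
  moreover have "(a, 0) \<in> dom split_struc" "deg split_struc (a, 0) = fst (L a)"
    using deg_split_struc[OF p(2)] W_hd[OF p(2)] p(2) by (auto simp: dom_split_struc)
  ultimately show "\<exists>q\<in>dom split_struc. tp1 split_struc q = tp1 split_struc p \<and>
      (\<exists>(v0, vs)\<in>set Ls. deg split_struc p \<in> set vs \<and> deg split_struc q = v0)"
    using L[OF p(2)] p(1) tp1_split_struc
    by (cases "L a") (fastforce intro!: bexI[of _ "(a, 0)"])
qed

end

lemma ex_degree_split:
  assumes "finite (dom M)"
    and deg_sum: "\<And>a \<eta>. a \<in> dom M \<Longrightarrow> \<eta> \<noteq> null2 \<Longrightarrow> deg M a \<eta> = (\<Sum>c<length (W a). (W a ! c) \<eta>)"
    and W_null2: "\<And>a c. a \<in> dom M \<Longrightarrow> c < length (W a) \<Longrightarrow> (W a ! c) null2 = 0"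
  shows "\<exists>\<pi>. degree_split M W \<pi>"
proof -
  have "\<exists>\<pi>. (\<forall>b. b \<in> dom M \<longrightarrow> b \<noteq> a \<longrightarrow> tp2 M a b \<noteq> null2 \<longrightarrow> \<pi> b < length (W a)) \<and>
          (\<forall>c \<eta>. c < length (W a) \<longrightarrow> \<eta> \<noteq> null2 \<longrightarrow>
             card {b \<in> dom M. b \<noteq> a \<and> tp2 M a b = \<eta> \<and> \<pi> b = c} = (W a ! c) \<eta>)"
    if a: "a \<in> dom M" for a
  proof -
    obtain \<pi> where "\<And>b. b \<in> dom M \<Longrightarrow> b \<noteq> a \<Longrightarrow> tp2 M a b \<noteq> null2 \<Longrightarrow> \<pi> b < length (W a)"
      and "\<And>c \<eta>. c < length (W a) \<Longrightarrow> \<eta> \<noteq> null2 \<Longrightarrow>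
           card {b \<in> dom M. b \<noteq> a \<and> tp2 M a b = \<eta> \<and> \<pi> b = c} = (W a ! c) \<eta>"
      using neighbourhood_partition[of M a "W a"] assms(1) deg_sum[OF a] by auto
    then show ?thesis by blast
  qed
  then have "\<exists>\<pi>. \<forall>a\<in>dom M. (\<forall>b. b \<in> dom M \<longrightarrow> b \<noteq> a \<longrightarrow> tp2 M a b \<noteq> null2 \<longrightarrow> \<pi> a b < length (W a)) \<and>
          (\<forall>c \<eta>. c < length (W a) \<longrightarrow> \<eta> \<noteq> null2 \<longrightarrow>
             card {b \<in> dom M. b \<noteq> a \<and> tp2 M a b = \<eta> \<and> \<pi> a b = c} = (W a ! c) \<eta>)"
    by (intro bchoice) blast
  then show ?thesis
    using W_null2 unfolding degree_split_def by blast
qed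

lemma sum_list_apply_conv_sum_nth: "(\<Sum>v\<leftarrow>vs. v t) = (\<Sum>c<length vs. (vs ! c) t)"
  by (simp add: sum_list_sum_nth atLeast0LessThan)

lemma linsets_deg_decomp:
  assumes "\<forall>a\<in>dom M. deg M a \<in> (\<Union>(v0, vs) \<in> set Ls. linset v0 vs)"
  obtains L W where "\<And>a. a \<in> dom M \<Longrightarrow> L a \<in> set Ls"
    and "\<And>a. a \<in> dom M \<Longrightarrow> W a \<noteq> [] \<and> W a ! 0 = fst (L a)"
    and "\<And>a. a \<in> dom M \<Longrightarrow> set (W a) \<subseteq> insert (fst (L a)) (set (snd (L a)))"
    and "\<And>a \<eta>. a \<in> dom M \<Longrightarrow> deg M a \<eta> = (\<Sum>c<length (W a). (W a ! c) \<eta>)"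
proof -
  have "\<exists>Lws. fst Lws \<in> set Ls \<and> set (snd Lws) \<subseteq> set (snd (fst Lws)) \<and>
      (\<forall>t. deg M a t = fst (fst Lws) t + (\<Sum>v\<leftarrow>snd Lws. v t))" if a: "a \<in> dom M" for a
  proof -
    obtain v0 vs where Lv: "(v0, vs) \<in> set Ls" "deg M a \<in> linset v0 vs"
      using assms a by blast
    obtain ws where "set ws \<subseteq> set vs" "\<And>t. deg M a t = v0 t + (\<Sum>v\<leftarrow>ws. v t)"
      using linset_decomp[OF Lv(2)] by blast
    then show ?thesis using Lv(1) by (intro exI[of _ "((v0, vs), ws)"]) auto
  qed
  then have "\<exists>Lws. \<forall>a\<in>dom M. fst (Lws a) \<in> set Ls \<and> set (snd (Lws a)) \<subseteq> set (snd (fst (Lws a))) \<and>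
      (\<forall>t. deg M a t = fst (fst (Lws a)) t + (\<Sum>v\<leftarrow>snd (Lws a). v t))"
    by (intro bchoice) blast
  then obtain Lws where Lws: "\<forall>a\<in>dom M. fst (Lws a) \<in> set Ls \<and> set (snd (Lws a)) \<subseteq> set (snd (fst (Lws a))) \<and>
      (\<forall>t. deg M a t = fst (fst (Lws a)) t + (\<Sum>v\<leftarrow>snd (Lws a). v t))"
    by blast
  show ?thesis
  proof (rule that[of "\<lambda>a. fst (Lws a)" "\<lambda>a. fst (fst (Lws a)) # snd (Lws a)"])
    fix a \<eta> assume a: "a \<in> dom M"
    show "deg M a \<eta> = (\<Sum>c<length (fst (fst (Lws a)) # snd (Lws a)). ((fst (fst (Lws a)) # snd (Lws a)) ! c) \<eta>)"
      using Lws a sum_list_apply_conv_sum_nth[where vs="fst (fst (Lws a)) # snd (Lws a)" and t=\<eta>] by simp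
  qed (use Lws in auto)
qed

lemma sat_Psi_imp_sat_Psi_star_split:
  fixes M :: "('a, 'u, 'b) struc"
  assumes fin: "finite_struc M" and sat: "sat_Psi M \<gamma> cs Ls"
    and null: "\<forall>(v0, vs) \<in> set Ls. \<forall>v \<in> insert v0 (set vs). v null2 = 0"
  shows "\<exists>M' :: ('a \<times> nat, 'u, 'b) struc. finite_struc M' \<and> sat_Psi_star M' \<gamma> cs Ls"
proof -
  obtain L W where L: "\<And>a. a \<in> dom M \<Longrightarrow> L a \<in> set Ls"
    and W_hd: "\<And>a. a \<in> dom M \<Longrightarrow> W a \<noteq> [] \<and> W a ! 0 = fst (L a)"
    and W_set: "\<And>a. a \<in> dom M \<Longrightarrow> set (W a) \<subseteq> insert (fst (L a)) (set (snd (L a)))"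
    and deg_sum: "\<And>a \<eta>. a \<in> dom M \<Longrightarrow> deg M a \<eta> = (\<Sum>c<length (W a). (W a ! c) \<eta>)"
    using sat unfolding sat_Psi_def by (elim conjE linsets_deg_decomp) blast
  have "(W a ! c) null2 = 0" if "a \<in> dom M" "c < length (W a)" for a c
    using null L[OF that(1)] W_set[OF that(1)] nth_mem[OF that(2)] by fastforce
  then obtain \<pi> where "degree_split M W \<pi>"
    using ex_degree_split[of M W] fin deg_sum by (auto simp: finite_struc_def)
  then interpret degree_split M W \<pi> .
  have "sat_Psi_star split_struc \<gamma> cs Ls"
    using sat L W_hd W_set by (intro sat_Psi_star_split_struc) (auto simp: sat_Psi_def)
  moreover have "finite_struc split_struc"
    using finite_struc_split_struc fin W_hd by blast
  ultimately show ?thesis by blast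
qed

lemma mod_add_cancel_left_less:
  fixes a b i K :: nat
  assumes "a < K" "b < K" "(i + a) mod K = (i + b) mod K"
  shows "a = b"
proof -
  have "(a + i) mod K = (b + i) mod K" using assms(3) by (simp add: add.commute)
  then have "a mod K = b mod K" by (simp add: nat_mod_eq_iff)
  then show ?thesis using assms by simp
qed

lemma mod_add_cancel_right_less:
  fixes a i i' K :: nat
  assumes "i < K" "i' < K" "(i + a) mod K = (i' + a) mod K"
  shows "i = i'"
  using mod_add_cancel_left_less[of i K i' a] assms by (simp add: add.commute)

lemma ex_less_add_mod_eq:
  fixes u k K :: nat
  assumes "u < K" "k < K"
  shows "\<exists>i<K. (i + u) mod K = k"
proof -
  have "((k + K - u) mod K + u) mod K = (k + K - u + u) mod K" by (simp add: mod_add_left_eq)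
  also have "\<dots> = k" using assms by simp
  finally show ?thesis using assms by (intro exI[of _ "(k + K - u) mod K"]) auto
qed

lemma add_mod_eq_imp_diff_eq:
  fixes a1 a2 b1 b2 i1 i2 K B :: nat
  assumes "(i1 + a1) mod K = (i2 + a2) mod K" "(i1 + b1) mod K = (i2 + b2) mod K"
    and "a1 \<le> B" "a2 \<le> B" "b1 \<le> B" "b2 \<le> B" "2 * B < K"
  shows "int a1 - int a2 = int b1 - int b2"
proof -
  have "int (i1 + a1) mod int K = int (i2 + a2) mod int K"
    using assms(1) by (metis of_nat_mod)
  then have d1: "int K dvd (int i1 + int a1) - (int i2 + int a2)"
    by (simp add: mod_eq_dvd_iff)
  have "int (i1 + b1) mod int K = int (i2 + b2) mod int K"
    using assms(2) by (metis of_nat_mod)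
  then have d2: "int K dvd (int i1 + int b1) - (int i2 + int b2)"
    by (simp add: mod_eq_dvd_iff)
  have dvd: "int K dvd (int a1 - int a2) - (int b1 - int b2)"
    using dvd_diff[OF d1 d2] by (simp add: algebra_simps)
  have bound: "\<bar>(int a1 - int a2) - (int b1 - int b2)\<bar> < int K"
    using assms(3-7) by linarith
  show ?thesis
  proof (rule ccontr)
    assume "int a1 - int a2 \<noteq> int b1 - int b2"
    then have "(int a1 - int a2) - (int b1 - int b2) \<noteq> 0" by simp
    from dvd_imp_le_int[OF this dvd] show False using bound by simp
  qed
qed

definition sidon_code :: "nat \<Rightarrow> nat" where
  "sidon_code n = (if n = 0 then 0 else 3 ^ n)"

lemma strict_mono_sidon_code: "strict_mono sidon_code"
  unfolding strict_mono_Suc_iff by (auto simp: sidon_code_def)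

lemma sidon_code_le_pow: "n \<le> N \<Longrightarrow> sidon_code n \<le> 3 ^ N"
  by (auto simp: sidon_code_def)

lemma sidon_code_gap:
  assumes "p' < p"
  shows "sidon_code (p - 1) < sidon_code p - sidon_code p'"
proof -
  have "sidon_code p' \<le> sidon_code (p - 1)"
    using assms strict_mono_sidon_code by (simp add: strict_mono_less_eq)
  moreover have "2 * sidon_code (p - 1) < sidon_code p"
    using assms by (cases p) (auto simp: sidon_code_def)
  ultimately show ?thesis by linarith
qed

lemma sidon_code_diff_eq_pos:
  assumes "p2 < p1" and eq: "int (sidon_code p1) - int (sidon_code p2) = int (sidon_code q1) - int (sidon_code q2)"
  shows "p1 = q1 \<and> p2 = q2"
proof -
  have "sidon_code p2 < sidon_code p1"
    using assms(1) strict_mono_sidon_code by (simp add: strict_mono_less)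
  then have q: "sidon_code q2 < sidon_code q1" using eq by linarith
  then have "q2 < q1" using strict_mono_sidon_code by (simp add: strict_mono_less)
  have "\<not> p1 < q1"
  proof
    assume "p1 < q1"
    then have "sidon_code p1 \<le> sidon_code (q1 - 1)"
      using strict_mono_sidon_code by (simp add: strict_mono_less_eq)
    then show False using sidon_code_gap[OF \<open>q2 < q1\<close>] eq q by linarith
  qed
  moreover have "\<not> q1 < p1"
  proof
    assume "q1 < p1"
    then have "sidon_code q1 \<le> sidon_code (p1 - 1)"
      using strict_mono_sidon_code by (simp add: strict_mono_less_eq)
    then show False using sidon_code_gap[OF assms(1)] eq \<open>sidon_code p2 < sidon_code p1\<close> by linarith
  qed
  ultimately have "p1 = q1" by simp
  then have "sidon_code p2 = sidon_code q2" using eq by simp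
  then show ?thesis using \<open>p1 = q1\<close> strict_mono_sidon_code by (simp add: strict_mono_eq)
qed

lemma sidon_code_diff_eq:
  assumes "p1 \<noteq> p2"
    and "int (sidon_code p1) - int (sidon_code p2) = int (sidon_code q1) - int (sidon_code q2)"
  shows "p1 = q1 \<and> p2 = q2"
proof (cases "p2 < p1")
  case True
  then show ?thesis using sidon_code_diff_eq_pos assms(2) by blast
next
  case False
  then have "p1 < p2" using assms(1) by simp
  moreover have "int (sidon_code p2) - int (sidon_code p1) = int (sidon_code q2) - int (sidon_code q1)"
    using assms(2) by linarith
  ultimately show ?thesis using sidon_code_diff_eq_pos by blast
qed

text \<open>Distinct pairs (x, l)
  with x a non-hub get distinct positive codes, so two distinct copies share at most one node
  (node_two_copies) and no 2-type is created or destroyed.  The last coordinate of a hub node names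
  the linear set it stands for: the node (b, i, j) absorbs each non-hub x with hub b and lin x = j once
  from every l < P, so its degree is deg b + P * (sum of the absorbed degrees).\<close>

locale hub_merge =
  fixes M :: "('a, 'u, 'b) struc" and Ls :: "(('b type2 \<Rightarrow> nat) \<times> ('b type2 \<Rightarrow> nat) list) list"
    and H :: "'a set" and hub :: "'a \<Rightarrow> 'a" and lin :: "'a \<Rightarrow> nat"
    and num :: "'a \<Rightarrow> nat" and m :: nat
  assumes finite_dom: "finite (dom M)"
    and hubs_subset: "H \<subseteq> dom M"
    and deg_hubs: "\<And>b. b \<in> H \<Longrightarrow> \<exists>(v0, vs) \<in> set Ls. deg M b = v0"
    and hub_in: "\<And>x. x \<in> dom M - H \<Longrightarrow> hub x \<in> H"
    and tp1_hub: "\<And>x. x \<in> dom M - H \<Longrightarrow> tp1 M (hub x) = tp1 M x"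
    and lin_less: "\<And>x. x \<in> dom M - H \<Longrightarrow> lin x < length Ls"
    and deg_nonhub: "\<And>x. x \<in> dom M - H \<Longrightarrow> deg M x \<in> set (snd (Ls ! lin x))"
    and deg_hub: "\<And>x. x \<in> dom M - H \<Longrightarrow> deg M (hub x) = fst (Ls ! lin x)"
    and num_inj: "inj_on num (dom M - H)"
    and num_less: "\<And>x. x \<in> dom M - H \<Longrightarrow> num x < m"
begin

definition P :: nat where "P = length Ls"

definition K :: nat where "K = 2 * 3 ^ (m * P) + 1"

definition code :: "'a \<Rightarrow> nat \<Rightarrow> nat" where
  "code x l = (if x \<in> H then 0 else num x * P + l + 1)"

definition copies :: "(nat \<times> nat) set" where "copies = {..<K} \<times> {..<P}"

definition node :: "'a \<times> nat \<times> nat \<Rightarrow> 'a \<times> nat \<times> nat" where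
  "node p = (case p of (x, i, l) \<Rightarrow>
     if x \<in> H then (x, i, l) else (hub x, (i + sidon_code (code x l)) mod K, lin x))"

lemma node_simp:
  "node (x, i, l) = (if x \<in> H then (x, i, l) else (hub x, (i + sidon_code (code x l)) mod K, lin x))"
  by (simp add: node_def)

lemma node_hub: "b \<in> H \<Longrightarrow> node (b, c) = (b, c)"
  by (cases c) (simp add: node_simp)

lemma node_mod: "i < K \<Longrightarrow> (i + sidon_code (code x l)) mod K = fst (snd (node (x, i, l)))"
  by (auto simp: node_simp code_def sidon_code_def)

lemma code_le: assumes "x \<in> dom M" "l < P" shows "code x l \<le> m * P"
proof (cases "x \<in> H")
  case False
  then have "(num x + 1) * P \<le> m * P" using num_less assms by (intro mult_le_mono1) (simp add: Suc_le_eq)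
  then show ?thesis using False assms by (simp add: code_def algebra_simps)
qed (simp add: code_def)

lemma sidon_code_code_le: "x \<in> dom M \<Longrightarrow> l < P \<Longrightarrow> sidon_code (code x l) \<le> 3 ^ (m * P)"
  using code_le sidon_code_le_pow by blast

lemma K_gt: "2 * 3 ^ (m * P) < K"
  by (simp add: K_def)

lemma sidon_code_code_less: "x \<in> dom M \<Longrightarrow> l < P \<Longrightarrow> sidon_code (code x l) < K"
  using sidon_code_code_le K_gt by fastforce

lemma code_eq_0_iff: "code x l = 0 \<longleftrightarrow> x \<in> H"
  by (simp add: code_def)

lemma code_inj:
  assumes "x \<in> dom M" "y \<in> dom M" "l < P" "l' < P" "code x l = code y l'" "code x l \<noteq> 0"
  shows "x = y \<and> l = l'"
proof -
  have "x \<notin> H" "y \<notin> H" using assms(5,6) code_eq_0_iff by metis+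
  then have e: "num x * P + l = num y * P + l'" using assms(5) by (simp add: code_def)
  have "(num x * P + l) div P = num x" "(num y * P + l') div P = num y" using assms(3,4) by auto
  then have "num x = num y" using e by simp
  then have "x = y" using num_inj assms(1,2) \<open>x \<notin> H\<close> \<open>y \<notin> H\<close> by (auto dest: inj_onD)
  then show ?thesis using e by simp
qed

lemma node_in: "x \<in> dom M \<Longrightarrow> c \<in> copies \<Longrightarrow> node (x, c) \<in> H \<times> copies"
  using hub_in lin_less by (cases c) (auto simp: node_simp copies_def P_def K_def)

lemma node_same_copy:
  assumes "x \<in> dom M" "y \<in> dom M" "c \<in> copies" "node (x, c) = node (y, c)"
  shows "x = y"
proof -
  obtain i l where c: "c = (i, l)" "i < K" "l < P" using assms(3) by (auto simp: copies_def)
  then have "(i + sidon_code (code x l)) mod K = (i + sidon_code (code y l)) mod K"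
    using node_mod assms(4) by metis
  then have "sidon_code (code x l) = sidon_code (code y l)"
    using mod_add_cancel_left_less sidon_code_code_less assms(1,2) c by blast
  then have codes: "code x l = code y l"
    using strict_mono_sidon_code by (simp add: strict_mono_eq)
  show ?thesis
  proof (cases "x \<in> H")
    case True
    then have "y \<in> H" using codes code_eq_0_iff by metis
    then show ?thesis using True assms(4) c by (simp add: node_hub)
  next
    case False
    then show ?thesis using codes code_inj assms(1,2) c code_eq_0_iff by metis
  qed
qed

lemma node_eq_same_code:
  assumes "x1 \<in> dom M" "x2 \<in> dom M" "c1 \<in> copies" "c2 \<in> copies"
    and "node (x1, c1) = node (x2, c2)" "code x1 (snd c1) = code x2 (snd c2)"
  shows "c1 = c2"
proof -
  obtain i1 l1 i2 l2 where c: "c1 = (i1, l1)" "c2 = (i2, l2)" "i1 < K" "i2 < K" "l1 < P" "l2 < P"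
    using assms(3,4) by (auto simp: copies_def)
  then have "(i1 + sidon_code (code x1 l1)) mod K = (i2 + sidon_code (code x1 l1)) mod K"
    using node_mod assms(5,6) by (metis snd_conv)
  then have "i1 = i2" using mod_add_cancel_right_less c by blast
  show ?thesis
  proof (cases "code x1 l1 = 0")
    case True
    then have "x1 \<in> H" "x2 \<in> H" using assms(6) c code_eq_0_iff by (metis snd_conv)+
    then show ?thesis using assms(5) node_hub by simp
  next
    case False
    then show ?thesis using code_inj assms(1,2,6) c \<open>i1 = i2\<close> by auto
  qed
qed

lemma node_two_copies:
  assumes xy: "x1 \<in> dom M" "x2 \<in> dom M" "y1 \<in> dom M" "y2 \<in> dom M"
    and c: "c1 \<in> copies" "c2 \<in> copies" "c1 \<noteq> c2"
    and x: "node (x1, c1) = node (x2, c2)" and y: "node (y1, c1) = node (y2, c2)"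
  shows "x1 = y1 \<and> x2 = y2"
proof -
  obtain i1 l1 i2 l2 where c': "c1 = (i1, l1)" "c2 = (i2, l2)" "i1 < K" "i2 < K" "l1 < P" "l2 < P"
    using c(1,2) by (auto simp: copies_def)
  define p1 p2 q1 q2 where "p1 = code x1 l1" "p2 = code x2 l2" "q1 = code y1 l1" "q2 = code y2 l2"
  have "(i1 + sidon_code p1) mod K = (i2 + sidon_code p2) mod K"
    "(i1 + sidon_code q1) mod K = (i2 + sidon_code q2) mod K"
    using node_mod x y c' by (metis p1_p2_q1_q2_def)+
  moreover have "sidon_code p1 \<le> 3 ^ (m * P)" "sidon_code p2 \<le> 3 ^ (m * P)"
    "sidon_code q1 \<le> 3 ^ (m * P)" "sidon_code q2 \<le> 3 ^ (m * P)"
    using sidon_code_code_le xy c' p1_p2_q1_q2_def by auto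
  ultimately have diff: "int (sidon_code p1) - int (sidon_code p2) = int (sidon_code q1) - int (sidon_code q2)"
    using add_mod_eq_imp_diff_eq K_gt by blast
  have "p1 \<noteq> p2" using node_eq_same_code[OF xy(1,2) c(1,2) x] c c' p1_p2_q1_q2_def by auto
  then have pq: "p1 = q1" "p2 = q2" using sidon_code_diff_eq diff by blast+
  have "y1 = x1 \<or> y2 = x2"
  proof (cases "p1 = 0")
    case True
    then have "p2 \<noteq> 0" using \<open>p1 \<noteq> p2\<close> by simp
    then show ?thesis using code_inj xy c' pq p1_p2_q1_q2_def by metis
  next
    case False
    then show ?thesis using code_inj xy c' pq p1_p2_q1_q2_def by metis
  qed
  then show ?thesis
    using x y node_same_copy[OF xy(1,3) c(1)] node_same_copy[OF xy(2,4) c(2)] by auto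
qed

definition merged :: "('a \<times> nat \<times> nat, 'u, 'b) struc" where
  "merged = \<lparr>dom = H \<times> copies, uI = (\<lambda>u N. uI M u (fst N)),
     bI = (\<lambda>r N N'. \<exists>x\<in>dom M. \<exists>y\<in>dom M. \<exists>c\<in>copies. node (x, c) = N \<and> node (y, c) = N' \<and> bI M r x y)\<rparr>"

lemma tp1_fst_node: "x \<in> dom M \<Longrightarrow> tp1 M (fst (node (x, c))) = tp1 M x"
  using tp1_hub by (cases c) (auto simp: node_simp)

lemma bI_merged_node:
  assumes xy: "x \<in> dom M" "y \<in> dom M" and c: "c \<in> copies"
  shows "bI merged r (node (x, c)) (node (y, c)) = bI M r x y"
proof
  assume "bI M r x y"
  then show "bI merged r (node (x, c)) (node (y, c))" using assms by (auto simp: merged_def)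
next
  assume "bI merged r (node (x, c)) (node (y, c))"
  then obtain x' y' c' where w: "x' \<in> dom M" "y' \<in> dom M" "c' \<in> copies"
    "node (x', c') = node (x, c)" "node (y', c') = node (y, c)" "bI M r x' y'"
    by (auto simp: merged_def)
  show "bI M r x y"
  proof (cases "c' = c")
    case True
    then show ?thesis using node_same_copy w xy by metis
  next
    case False
    then have "x' = y'" "x = y" using node_two_copies[OF w(1) xy(1) w(2) xy(2) w(3) c False w(4,5)] by auto
    moreover have "tp1 M x' = tp1 M x" using tp1_fst_node w(1,4) xy(1) by metis
    ultimately show ?thesis using w(6) by (auto simp: tp1_def fun_eq_iff)
  qed
qed

lemma tp2_merged_node:
  "x \<in> dom M \<Longrightarrow> y \<in> dom M \<Longrightarrow> c \<in> copies \<Longrightarrow> tp2 merged (node (x, c)) (node (y, c)) = tp2 M x y"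
  by (simp add: tp2_def bI_merged_node)

lemma qf_eval_merged_node:
  assumes "x \<in> dom M" "y \<in> dom M" "c \<in> copies"
  shows "qf_eval merged (asg (node (x, c)) (node (y, c))) f = qf_eval M (asg x y) f"
proof (rule qf_eval_asg_cong)
  show "(node (x, c) = node (y, c)) = (x = y)" using node_same_copy assms by blast
qed (use assms bI_merged_node tp1_fst_node in \<open>auto simp: merged_def tp1_def fun_eq_iff\<close>)

lemma dom_merged_node: "N \<in> dom merged \<Longrightarrow> N = node N \<and> fst N \<in> dom M \<and> snd N \<in> copies"
  using node_hub hubs_subset by (auto simp: merged_def)

lemma base_ok_merged:
  assumes "base_ok M \<gamma> cs"
  shows "base_ok merged \<gamma> cs"
proof -
  have "qf_eval merged (asg N N) \<gamma>" if "N \<in> dom merged" for N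
    using qf_eval_merged_node[of "fst N" "fst N" "snd N" \<gamma>] dom_merged_node[OF that] assms
    unfolding base_ok_def by (metis prod.collapse)
  moreover have "qf_eval merged (asg N N') \<alpha>"
    if e\<alpha>: "(e, \<alpha>) \<in> set cs" and NN': "N \<in> dom merged" "N' \<in> dom merged"
      and guard: "guard_eval merged e N N'" for e \<alpha> N N'
  proof -
    have guarded: "guard_eval M e x y \<Longrightarrow> qf_eval M (asg x y) \<alpha>" if "x \<in> dom M" "y \<in> dom M" for x y
      using assms e\<alpha> that unfolding base_ok_def by fastforce
    obtain x y c where "x \<in> dom M" "y \<in> dom M" "c \<in> copies" "node (x, c) = N" "node (y, c) = N'"
      "guard_eval M e x y"
    proof (cases e)
      case GEq
      then show ?thesis
        using that dom_merged_node[OF NN'(1)] guard by (metis guard_eval.simps(1) prod.collapse)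
    next
      case (GFwd r)
      then show ?thesis using that guard by (auto simp: merged_def)
    next
      case (GBwd r)
      then show ?thesis using that guard by (auto simp: merged_def)
    qed
    then show ?thesis using qf_eval_merged_node guarded by metis
  qed
  ultimately show ?thesis unfolding base_ok_def by blast
qed

definition members :: "'a \<times> nat \<times> nat \<Rightarrow> ('a \<times> nat \<times> nat) set" where
  "members N = {p \<in> dom M \<times> copies. node p = N}"

definition absorbed :: "'a \<times> nat \<times> nat \<Rightarrow> 'a set" where
  "absorbed N = {x \<in> dom M - H. hub x = fst N \<and> lin x = snd (snd N)}"

lemma finite_copies: "finite copies"
  by (simp add: copies_def)

lemma finite_members: "finite (members N)"
  using finite_dom finite_copies by (auto simp: members_def intro: finite_subset[of _ "dom M \<times> copies"])

lemma node_edge_unique: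
  assumes "x1 \<in> dom M" "x2 \<in> dom M" "y1 \<in> dom M" "y2 \<in> dom M" "c1 \<in> copies" "c2 \<in> copies"
    and "node (x1, c1) = node (x2, c2)" "node (y1, c1) = node (y2, c2)" "y1 \<noteq> x1"
  shows "x1 = x2 \<and> y1 = y2 \<and> c1 = c2"
proof (cases "c1 = c2")
  case True
  then show ?thesis using node_same_copy assms by metis
next
  case False
  then show ?thesis using node_two_copies assms by metis
qed

lemma deg_merged_eq_sum_members:
  assumes N: "N \<in> H \<times> copies" and \<eta>: "\<eta> \<noteq> null2"
  shows "deg merged N \<eta> = (\<Sum>p\<in>members N. deg M (fst p) \<eta>)"
proof -
  define S where "S = {N' \<in> dom merged. N' \<noteq> N \<and> tp2 merged N N' = \<eta>}"
  define T where "T = Sigma (members N) (\<lambda>p. {y \<in> dom M. y \<noteq> fst p \<and> tp2 M (fst p) y = \<eta>})"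
  define \<phi> where "\<phi> q = node (snd q, snd (fst q))" for q :: "('a \<times> nat \<times> nat) \<times> 'a"
  have "bij_betw \<phi> T S"
  proof (rule bij_betw_imageI)
    show "inj_on \<phi> T"
    proof (rule inj_onI)
      fix q1 q2 assume "q1 \<in> T" "q2 \<in> T" "\<phi> q1 = \<phi> q2"
      then show "q1 = q2"
        using node_edge_unique by (auto simp: T_def members_def \<phi>_def)
    qed
  next
    show "\<phi> ` T = S"
    proof (intro equalityI subsetI)
      fix N' assume "N' \<in> \<phi> ` T"
      then obtain x c y where h: "x \<in> dom M" "c \<in> copies" "node (x, c) = N" "y \<in> dom M" "y \<noteq> x"
        "tp2 M x y = \<eta>" "N' = node (y, c)" by (auto simp: T_def members_def \<phi>_def)
      have "N' \<in> dom merged" using node_in h by (simp add: merged_def)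
      moreover have "N' \<noteq> N" using node_same_copy h by metis
      moreover have "tp2 merged N N' = \<eta>" using tp2_merged_node h by metis
      ultimately show "N' \<in> S" by (simp add: S_def)
    next
      fix N' assume "N' \<in> S"
      then have N': "N' \<noteq> N" "tp2 merged N N' = \<eta>" by (auto simp: S_def)
      then have "\<exists>r. bI merged r N N' \<or> bI merged r N' N" using \<eta> tp2_neq_null2_iff by metis
      then obtain x y c where h: "x \<in> dom M" "y \<in> dom M" "c \<in> copies" "node (x, c) = N" "node (y, c) = N'"
        by (auto simp: merged_def)
      moreover have "y \<noteq> x" "tp2 M x y = \<eta>" using h N' tp2_merged_node[OF h(1-3)] by auto
      ultimately have "((x, c), y) \<in> T" by (auto simp: T_def members_def)
      moreover have "\<phi> ((x, c), y) = N'" using h by (simp add: \<phi>_def)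
      ultimately show "N' \<in> \<phi> ` T" by force
    qed
  qed
  then have "card S = card T" by (rule bij_betw_same_card[symmetric])
  also have "card T = (\<Sum>p\<in>members N. card {y \<in> dom M. y \<noteq> fst p \<and> tp2 M (fst p) y = \<eta>})"
    unfolding T_def using finite_members finite_dom by (intro card_SigmaI) auto
  finally show ?thesis using \<eta> by (simp add: deg_def S_def)
qed

lemma nonhub_members_bij:
  assumes N: "N \<in> H \<times> copies"
  shows "bij_betw (\<lambda>p. (fst p, snd (snd p))) {p \<in> members N. fst p \<notin> H} (absorbed N \<times> {..<P})"
proof (rule bij_betw_imageI)
  show "inj_on (\<lambda>p. (fst p, snd (snd p))) {p \<in> members N. fst p \<notin> H}"
  proof (rule inj_onI)
    fix p1 p2 assume p: "p1 \<in> {p \<in> members N. fst p \<notin> H}" "p2 \<in> {p \<in> members N. fst p \<notin> H}"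
      and eq: "(fst p1, snd (snd p1)) = (fst p2, snd (snd p2))"
    obtain x i1 l i2 where p12: "p1 = (x, i1, l)" "p2 = (x, i2, l)" using eq by (cases p1, cases p2) auto
    then have "i1 < K" "i2 < K" using p by (auto simp: members_def copies_def)
    moreover have "(i1 + sidon_code (code x l)) mod K = (i2 + sidon_code (code x l)) mod K"
      using node_mod p p12 \<open>i1 < K\<close> \<open>i2 < K\<close> by (auto simp: members_def)
    ultimately show "p1 = p2" using mod_add_cancel_right_less p12 by blast
  qed
next
  obtain b k j where Nb: "N = (b, k, j)" "b \<in> H" "k < K" "j < P" using N by (auto simp: copies_def)
  show "(\<lambda>p. (fst p, snd (snd p))) ` {p \<in> members N. fst p \<notin> H} = absorbed N \<times> {..<P}"
  proof (intro equalityI subsetI)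
    fix q assume "q \<in> (\<lambda>p. (fst p, snd (snd p))) ` {p \<in> members N. fst p \<notin> H}"
    then show "q \<in> absorbed N \<times> {..<P}"
      by (auto simp: members_def copies_def absorbed_def node_simp)
  next
    fix q assume "q \<in> absorbed N \<times> {..<P}"
    then obtain x l where h: "q = (x, l)" "x \<in> dom M" "x \<notin> H" "hub x = b" "lin x = j" "l < P"
      by (auto simp: absorbed_def Nb)
    obtain i where i: "i < K" "(i + sidon_code (code x l)) mod K = k"
      using ex_less_add_mod_eq[OF sidon_code_code_less[OF h(2) h(6)] Nb(3)] by blast
    then have "(x, i, l) \<in> {p \<in> members N. fst p \<notin> H}"
      using h Nb by (simp add: members_def copies_def node_simp)
    then show "q \<in> (\<lambda>p. (fst p, snd (snd p))) ` {p \<in> members N. fst p \<notin> H}" using h by force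
  qed
qed

lemma sum_members_deg:
  assumes N: "N \<in> H \<times> copies"
  shows "(\<Sum>p\<in>members N. deg M (fst p) \<eta>) = deg M (fst N) \<eta> + (\<Sum>x\<in>absorbed N. P * deg M x \<eta>)"
proof -
  have "members N = insert N {p \<in> members N. fst p \<notin> H}"
    using N node_hub hubs_subset by (auto simp: members_def)
  moreover have "N \<notin> {p \<in> members N. fst p \<notin> H}" using N by auto
  moreover have "(\<Sum>p\<in>{p \<in> members N. fst p \<notin> H}. deg M (fst p) \<eta>)
      = (\<Sum>q\<in>absorbed N \<times> {..<P}. deg M (fst q) \<eta>)"
    using sum.reindex_bij_betw[OF nonhub_members_bij[OF N], of "\<lambda>q. deg M (fst q) \<eta>"] by simp
  moreover have "\<dots> = (\<Sum>x\<in>absorbed N. P * deg M x \<eta>)"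
    using sum.cartesian_product[where g="\<lambda>x l. deg M x \<eta>" and B="{..<P}" and A="absorbed N"]
    by (simp add: case_prod_beta)
  ultimately show ?thesis using finite_members by (metis (no_types, lifting) finite_insert sum.insert)
qed

lemma deg_merged:
  assumes "N \<in> H \<times> copies"
  shows "deg merged N = (\<lambda>\<eta>. deg M (fst N) \<eta> + (\<Sum>x\<in>absorbed N. P * deg M x \<eta>))"
proof
  fix \<eta>
  show "deg merged N \<eta> = deg M (fst N) \<eta> + (\<Sum>x\<in>absorbed N. P * deg M x \<eta>)"
  proof (cases "\<eta> = null2")
    case True
    then show ?thesis by (simp add: deg_def)
  next
    case False
    then show ?thesis using deg_merged_eq_sum_members sum_members_deg assms by simp
  qed
qed

lemma deg_merged_in_linsets:
  assumes N: "N \<in> H \<times> copies"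
  shows "deg merged N \<in> (\<Union>(v0, vs) \<in> set Ls. linset v0 vs)"
proof (cases "absorbed N = {}")
  case True
  obtain v0 vs where "(v0, vs) \<in> set Ls" "deg M (fst N) = v0" using deg_hubs N by fastforce
  moreover have "deg merged N = deg M (fst N)" using deg_merged[OF N] True by simp
  ultimately show ?thesis using linset_base by fastforce
next
  case False
  then obtain x0 where x0: "x0 \<in> absorbed N" by auto
  define j where "j = snd (snd N)"
  have x0': "x0 \<in> dom M - H" "hub x0 = fst N" "lin x0 = j" using x0 by (auto simp: absorbed_def j_def)
  have "\<forall>x\<in>absorbed N. deg M x \<in> set (snd (Ls ! j))"
  proof
    fix x assume "x \<in> absorbed N"
    then have "x \<in> dom M - H" "lin x = j" by (auto simp: absorbed_def j_def)
    then show "deg M x \<in> set (snd (Ls ! j))" using deg_nonhub by metis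
  qed
  moreover have "finite (absorbed N)" using finite_dom by (auto simp: absorbed_def)
  ultimately have "deg merged N \<in> linset (fst (Ls ! j)) (snd (Ls ! j))"
    using deg_merged[OF N] deg_hub[OF x0'(1)] x0' linset_add_sum by simp
  moreover have "Ls ! j \<in> set Ls" using lin_less[OF x0'(1)] x0' by simp
  ultimately show ?thesis by (intro UN_I[of "Ls ! j"]) (auto simp: case_prod_beta)
qed

lemma sat_Psi_merged:
  assumes "base_ok M \<gamma> cs" "H \<noteq> {}" "Ls \<noteq> []"
  shows "finite_struc merged \<and> sat_Psi merged \<gamma> cs Ls"
proof
  have "copies \<noteq> {}" using assms(3) by (auto simp: copies_def P_def K_def)
  moreover have "finite H" using finite_dom hubs_subset by (rule finite_subset[rotated])
  ultimately show "finite_struc merged"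
    using assms(2) finite_copies by (auto simp: finite_struc_def merged_def)
  show "sat_Psi merged \<gamma> cs Ls"
    unfolding sat_Psi_def using base_ok_merged[OF assms(1)] deg_merged_in_linsets
    by (auto simp: merged_def)
qed

end

lemma sat_Psi_star_imp_sat_Psi_merge:
  fixes M :: "('a, 'u, 'b) struc"
  assumes fin: "finite_struc M" and sat: "sat_Psi_star M \<gamma> cs Ls"
  shows "\<exists>M' :: ('a \<times> nat \<times> nat, 'u, 'b) struc. finite_struc M' \<and> sat_Psi M' \<gamma> cs Ls"
proof -
  define H where "H = {a \<in> dom M. \<exists>(v0, vs)\<in>set Ls. deg M a = v0}"
  have "\<exists>bj. fst bj \<in> H \<and> tp1 M (fst bj) = tp1 M a \<and> snd bj < length Ls \<and>
      deg M a \<in> set (snd (Ls ! snd bj)) \<and> deg M (fst bj) = fst (Ls ! snd bj)"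
    if a: "a \<in> dom M - H" for a
  proof -
    have "\<forall>(v0, vs) \<in> set Ls. deg M a \<noteq> v0" using a by (auto simp: H_def)
    then obtain b v0 vs where b: "b \<in> dom M" "tp1 M b = tp1 M a" "(v0, vs) \<in> set Ls"
      "deg M a \<in> set vs" "deg M b = v0"
      using sat a unfolding sat_Psi_star_def by blast
    moreover obtain j where "j < length Ls" "Ls ! j = (v0, vs)"
      using b(3) by (auto simp: in_set_conv_nth)
    moreover have "b \<in> H" using b by (auto simp: H_def)
    ultimately show ?thesis by (intro exI[of _ "(b, j)"]) auto
  qed
  then have "\<exists>f. \<forall>a\<in>dom M - H. fst (f a) \<in> H \<and> tp1 M (fst (f a)) = tp1 M a \<and> snd (f a) < length Ls \<and>
      deg M a \<in> set (snd (Ls ! snd (f a))) \<and> deg M (fst (f a)) = fst (Ls ! snd (f a))"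
    by (intro bchoice) blast
  then obtain f where f: "\<forall>a\<in>dom M - H. fst (f a) \<in> H \<and> tp1 M (fst (f a)) = tp1 M a \<and>
      snd (f a) < length Ls \<and> deg M a \<in> set (snd (Ls ! snd (f a))) \<and> deg M (fst (f a)) = fst (Ls ! snd (f a))"
    by blast
  obtain num :: "'a \<Rightarrow> nat" and m where num: "num ` (dom M - H) = {i. i < m}" "inj_on num (dom M - H)"
    using finite_imp_inj_to_nat_seg[of "dom M - H"] fin by (auto simp: finite_struc_def)
  interpret hub_merge M Ls H "\<lambda>a. fst (f a)" "\<lambda>a. snd (f a)" num m
  proof
    show "finite (dom M)" using fin by (simp add: finite_struc_def)
    show "H \<subseteq> dom M" "\<And>b. b \<in> H \<Longrightarrow> \<exists>(v0, vs)\<in>set Ls. deg M b = v0" by (auto simp: H_def)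
    show "inj_on num (dom M - H)" by (rule num(2))
    show "\<And>x. x \<in> dom M - H \<Longrightarrow> num x < m" using num(1) by blast
  qed (use f in auto)
  obtain a where a: "a \<in> dom M" using fin by (auto simp: finite_struc_def)
  then have "H \<noteq> {}" using f by (cases "a \<in> H") auto
  moreover have "Ls \<noteq> []" using sat a unfolding sat_Psi_star_def by auto
  moreover have "base_ok M \<gamma> cs" using sat by (simp add: sat_Psi_star_def)
  ultimately show ?thesis using sat_Psi_merged by blast
qed

theorem mainTheorem13:
  fixes \<gamma> :: "('u::finite, 'b::finite) qf"
    and cs :: "('b guard \<times> ('u, 'b) qf) list"
    and Ls :: "(('b type2 \<Rightarrow> nat) \<times> ('b type2 \<Rightarrow> nat) list) list"
  assumes "qf_vars \<gamma> \<subseteq> {Vx}"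
    and "\<forall>(v0, vs) \<in> set Ls. \<forall>v \<in> insert v0 (set vs). v null2 = 0"
  shows "(\<exists>M :: (nat, 'u, 'b) struc. finite_struc M \<and> sat_Psi M \<gamma> cs Ls) \<longleftrightarrow>
         (\<exists>M :: (nat, 'u, 'b) struc. finite_struc M \<and> sat_Psi_star M \<gamma> cs Ls)"
proof
  assume "\<exists>M :: (nat, 'u, 'b) struc. finite_struc M \<and> sat_Psi M \<gamma> cs Ls"
  then obtain M2 :: "(nat \<times> nat, 'u, 'b) struc" where M2: "finite_struc M2" "sat_Psi_star M2 \<gamma> cs Ls"
    using sat_Psi_imp_sat_Psi_star_split assms(2) by blast
  obtain h and M' :: "(nat, 'u, 'b) struc" where "struc_iso h M2 M'"
    using finite_struc_iso_nat[OF M2(1)] .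
  then show "\<exists>M :: (nat, 'u, 'b) struc. finite_struc M \<and> sat_Psi_star M \<gamma> cs Ls"
    using M2 finite_struc_iso sat_Psi_star_struc_iso by blast
next
  assume "\<exists>M :: (nat, 'u, 'b) struc. finite_struc M \<and> sat_Psi_star M \<gamma> cs Ls"
  then obtain M3 :: "(nat \<times> nat \<times> nat, 'u, 'b) struc" where M3: "finite_struc M3" "sat_Psi M3 \<gamma> cs Ls"
    using sat_Psi_star_imp_sat_Psi_merge by blast
  obtain h and M' :: "(nat, 'u, 'b) struc" where "struc_iso h M3 M'"
    using finite_struc_iso_nat[OF M3(1)] .
  then show "\<exists>M :: (nat, 'u, 'b) struc. finite_struc M \<and> sat_Psi M \<gamma> cs Ls"
    using M3 finite_struc_iso sat_Psi_struc_iso by blast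
qed

end
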